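(* Let $(M,d)$ be a complete pointed metric space with $\gamma(M)>1$, where $\gamma(M)=\inf\{\frac{d(x,u)+d(u,y)}{d(x,y)}: x,u,y\in M\text{ distinct}\}$. Then every positive Radon measure $\mu$ on $\beta\widetilde{M}$ with $\|\mu\|=\|\Phi^*\mu\|$ is $\preccurlyeq$-minimal.
   Context: $\mathrm{Lip}_0(M)$: Lipschitz $f:M\to\mathbb{R}$ with $f(0)=0$ ($0$ the base point) normed by the Lipschitz constant. $\widetilde{M}=\{(x,y)\in M\times M:x\ne y\}$, $\beta\widetilde{M}$ its Stone–Čech compactification; Radon measures identified with $C(\beta\widetilde{M})^*$. $\Phi:\mathrm{Lip}_0(M)\to C(\beta\widetilde{M})$ maps $f$ to the continuous extension of $(x,y)\mapsto(f(x)-f(y))/d(x,y)$; $\Phi^*$ its adjoint. $G$ is the set of $g\in C(\beta\widetilde{M})$ with $d(x,y)g(x,y)\le d(x,u)g(x,u)+d(u,y)g(u,y)$ for all distinct $x,u,y\in M$; $\mu\preccurlyeq\nu$ iff $\int g\,d\mu\le\int g\,d\nu$ for all $g\in G$; $\mu$ is $\preccurlyeq$-minimal if every positive $\nu\preccurlyeq\mu$ satisfies $\mu\preccurlyeq\nu$. Throughout, $M$ has at least three distinct points. *)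

theory Defs
  imports "HOL-Analysis.Analysis"
begin

text \<open>C(beta Mtilde) is represented isometrically and order-isomorphically by the bounded
  continuous real functions on Mtilde (restriction map); we use canonical
  representatives vanishing off Mtilde. A Radon measure on beta Mtilde is a bounded
  linear functional on this space; its integral of g is the value mu g.\<close>

definition offdiag :: "('a \<times> 'a) set" where
  "offdiag = {(x, y). x \<noteq> y}"

definition Cb :: "('a::metric_space \<times> 'a \<Rightarrow> real) set" where
  "Cb = {g. continuous_on offdiag g \<and> bounded (g ` offdiag) \<and>
            (\<forall>z. z \<notin> offdiag \<longrightarrow> g z = 0)}"

definition supnorm :: "('a \<times> 'a \<Rightarrow> real) \<Rightarrow> real" where
  "supnorm g = (SUP z\<in>offdiag. \<bar>g z\<bar>)"

definition radon_functional :: "(('a::metric_space \<times> 'a \<Rightarrow> real) \<Rightarrow> real) \<Rightarrow> bool" where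
  "radon_functional mu \<longleftrightarrow>
     (\<forall>f\<in>Cb. \<forall>g\<in>Cb. \<forall>a b::real. mu (\<lambda>z. a * f z + b * g z) = a * mu f + b * mu g) \<and>
     (\<exists>C. \<forall>g\<in>Cb. \<bar>mu g\<bar> \<le> C * supnorm g)"

definition positive_functional :: "(('a::metric_space \<times> 'a \<Rightarrow> real) \<Rightarrow> real) \<Rightarrow> bool" where
  "positive_functional mu \<longleftrightarrow> (\<forall>g\<in>Cb. (\<forall>z\<in>offdiag. 0 \<le> g z) \<longrightarrow> 0 \<le> mu g)"

definition fnorm :: "(('a::metric_space \<times> 'a \<Rightarrow> real) \<Rightarrow> real) \<Rightarrow> real" where
  "fnorm mu = (SUP g\<in>{g\<in>Cb. supnorm g \<le> 1}. \<bar>mu g\<bar>)"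

definition Phi :: "('a::metric_space \<Rightarrow> real) \<Rightarrow> ('a \<times> 'a \<Rightarrow> real)" where
  "Phi f = (\<lambda>(x, y). if x = y then 0 else (f x - f y) / dist x y)"

definition Lip0 :: "'a::metric_space \<Rightarrow> ('a \<Rightarrow> real) set" where
  "Lip0 x0 = {f. f x0 = 0 \<and> (\<exists>L. \<forall>x y. \<bar>f x - f y\<bar> \<le> L * dist x y)}"

definition lip_const :: "('a::metric_space \<Rightarrow> real) \<Rightarrow> real" where
  "lip_const f = (SUP (x, y)\<in>offdiag. \<bar>f x - f y\<bar> / dist x y)"

text \<open>Norm of Phi^* mu in the dual of Lip_0(M): (Phi^* mu) f = mu (Phi f).\<close>
definition adj_norm :: "'a::metric_space \<Rightarrow> (('a \<times> 'a \<Rightarrow> real) \<Rightarrow> real) \<Rightarrow> real" where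
  "adj_norm x0 mu = (SUP f\<in>{f\<in>Lip0 x0. lip_const f \<le> 1}. \<bar>mu (Phi f)\<bar>)"

definition gamma_M :: "'a::metric_space itself \<Rightarrow> real" where
  "gamma_M _ = Inf {(dist x u + dist u y) / dist x y | x u y :: 'a.
                      x \<noteq> u \<and> u \<noteq> y \<and> x \<noteq> y}"

definition Gset :: "('a::metric_space \<times> 'a \<Rightarrow> real) set" where
  "Gset = {g\<in>Cb. \<forall>x u y. x \<noteq> u \<and> u \<noteq> y \<and> x \<noteq> y \<longrightarrow>
             dist x y * g (x, y) \<le> dist x u * g (x, u) + dist u y * g (u, y)}"

definition preceq :: "(('a::metric_space \<times> 'a \<Rightarrow> real) \<Rightarrow> real) \<Rightarrow> (('a \<times> 'a \<Rightarrow> real) \<Rightarrow> real) \<Rightarrow> bool" where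
  "preceq mu nu \<longleftrightarrow> (\<forall>g\<in>Gset. mu g \<le> nu g)"

definition preceq_minimal :: "(('a::metric_space \<times> 'a \<Rightarrow> real) \<Rightarrow> real) \<Rightarrow> bool" where
  "preceq_minimal mu \<longleftrightarrow>
     (\<forall>nu. radon_functional nu \<and> positive_functional nu \<and> preceq nu mu \<longrightarrow> preceq mu nu)"

end

theory Submission
  imports Defs
begin

text \<open>Both \<open>\<Phi> f\<close> and \<open>-\<Phi> f\<close> lie in \<open>G\<close>, since \<open>d(x,y) \<Phi> f (x,y) = f x - f y\<close> turns the
  defining inequality of \<open>G\<close> into an equality. Hence \<open>\<nu> \<preccurlyeq> \<mu>\<close> forces \<open>\<Phi>\<^sup>* \<nu> = \<Phi>\<^sup>* \<mu>\<close>, and for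
  positive \<open>\<nu>\<close> we get
  \<open>\<parallel>\<mu>\<parallel> = \<parallel>\<Phi>\<^sup>* \<mu>\<parallel> = \<parallel>\<Phi>\<^sup>* \<nu>\<parallel> \<le> \<parallel>\<nu>\<parallel> = \<nu>(1) \<le> \<mu>(1) = \<parallel>\<mu>\<parallel>\<close>, using \<open>1 \<in> G\<close>; so \<open>\<nu>(1) = \<mu>(1)\<close>. (The constant \<open>1\<close> is represented by
  \<open>indicator offdiag\<close>.)
  When \<open>\<gamma>(M) > 1\<close>, the strict triangle inequality \<open>\<gamma> d(x,y) \<le> d(x,u) + d(u,y)\<close> absorbs
  any bounded perturbation: \<open>K - g \<in> G\<close> for every \<open>g\<close> once the constant \<open>K\<close> is large.
  Then \<open>\<nu>(K - g) \<le> \<mu>(K - g)\<close> and \<open>\<nu>(1) = \<mu>(1)\<close> give \<open>\<mu>(g) \<le> \<nu>(g)\<close>.\<close>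

lemma offdiag_iff [simp]: "(x, y) \<in> offdiag \<longleftrightarrow> x \<noteq> y"
  by (simp add: offdiag_def)

lemma Cb_bounded:
  assumes "g \<in> Cb"
  obtains B where "\<And>z. \<bar>g z\<bar> \<le> B"
proof -
  from assms obtain B where "\<forall>w\<in>g ` offdiag. \<bar>w\<bar> \<le> B"
    by (auto simp: Cb_def bounded_iff)
  moreover have "g z = 0" if "z \<notin> offdiag" for z
    using assms that unfolding Cb_def by blast
  ultimately have "\<bar>g z\<bar> \<le> max B 0" for z
    by (cases "z \<in> offdiag") fastforce+
  then show thesis by (rule that)
qed

lemma Cb_linear_combination:
  assumes "f \<in> Cb" "g \<in> Cb"
  shows "(\<lambda>z. a * f z + b * g z) \<in> Cb"
proof -
  obtain Bf Bg where Bf: "\<And>z. \<bar>f z\<bar> \<le> Bf" and Bg: "\<And>z. \<bar>g z\<bar> \<le> Bg"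
    using Cb_bounded[OF assms(1)] Cb_bounded[OF assms(2)] by metis
  have "\<bar>a * f z + b * g z\<bar> \<le> \<bar>a\<bar> * Bf + \<bar>b\<bar> * Bg" for z
  proof -
    have "\<bar>a * f z + b * g z\<bar> \<le> \<bar>a\<bar> * \<bar>f z\<bar> + \<bar>b\<bar> * \<bar>g z\<bar>"
      by (metis abs_mult abs_triangle_ineq)
    also have "\<dots> \<le> \<bar>a\<bar> * Bf + \<bar>b\<bar> * Bg"
      using Bf Bg by (intro add_mono mult_left_mono) auto
    finally show ?thesis .
  qed
  then have "bounded ((\<lambda>z. a * f z + b * g z) ` offdiag)"
    by (auto simp: bounded_iff intro!: exI[of _ "\<bar>a\<bar> * Bf + \<bar>b\<bar> * Bg"])
  moreover have "continuous_on offdiag (\<lambda>z. a * f z + b * g z)"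
    using assms unfolding Cb_def by (intro continuous_intros) auto
  ultimately show ?thesis
    using assms by (simp add: Cb_def)
qed

lemma indicator_offdiag_in_Cb: "(indicator offdiag :: 'a::metric_space \<times> 'a \<Rightarrow> real) \<in> Cb"
proof -
  have "continuous_on offdiag (indicator offdiag :: 'a \<times> 'a \<Rightarrow> real)"
    by (rule continuous_on_eq[OF continuous_on_const[of _ 1]]) simp
  moreover have "bounded ((indicator offdiag :: 'a \<times> 'a \<Rightarrow> real) ` offdiag)"
    by (auto simp: bounded_iff)
  ultimately show ?thesis
    by (simp add: Cb_def)
qed

lemma indicator_offdiag_in_Gset: "indicator offdiag \<in> Gset"
  using indicator_offdiag_in_Cb by (auto simp: Gset_def dist_triangle)

lemma positive_functionalD:
  assumes "positive_functional nu" "g \<in> Cb" "\<And>z. z \<in> offdiag \<Longrightarrow> 0 \<le> g z"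
  shows "0 \<le> nu g"
  using assms by (simp add: positive_functional_def)

lemma preceqD:
  assumes "preceq nu mu" "g \<in> Gset"
  shows "nu g \<le> mu g"
  using assms by (simp add: preceq_def)

lemma radon_functional_linear:
  assumes "radon_functional mu" "f \<in> Cb" "g \<in> Cb"
  shows "mu (\<lambda>z. a * f z + b * g z) = a * mu f + b * mu g"
  using assms by (simp add: radon_functional_def)

lemma radon_functional_uminus:
  assumes "radon_functional mu" "g \<in> Cb"
  shows "mu (\<lambda>z. - g z) = - mu g"
  using radon_functional_linear[OF assms assms(2), of "-1" 0] by simp

lemma abs_le_supnorm:
  assumes "g \<in> Cb" "z \<in> offdiag"
  shows "\<bar>g z\<bar> \<le> supnorm g"
proof -
  obtain B where "\<And>z. \<bar>g z\<bar> \<le> B"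
    using Cb_bounded[OF assms(1)] by blast
  then have "bdd_above ((\<lambda>z. \<bar>g z\<bar>) ` offdiag)"
    by (meson bdd_aboveI2)
  then show ?thesis
    unfolding supnorm_def by (rule cSUP_upper[OF assms(2)])
qed

lemma positive_functional_abs_le:
  assumes "radon_functional nu" "positive_functional nu" "g \<in> Cb" "supnorm g \<le> 1"
  shows "\<bar>nu g\<bar> \<le> nu (indicator offdiag)"
proof -
  have "0 \<le> 1 * nu (indicator offdiag) + s * nu g" if s: "s = 1 \<or> s = -1" for s
  proof -
    have "(\<lambda>z. 1 * indicator offdiag z + s * g z) \<in> Cb"
      by (rule Cb_linear_combination[OF indicator_offdiag_in_Cb assms(3)])
    moreover have "0 \<le> 1 * indicator offdiag z + s * g z" if "z \<in> offdiag" for z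
    proof -
      have "\<bar>g z\<bar> \<le> 1"
        using abs_le_supnorm[OF assms(3) that] assms(4) by linarith
      then show ?thesis
        using s that by (auto simp: abs_le_iff)
    qed
    ultimately have "0 \<le> nu (\<lambda>z. 1 * indicator offdiag z + s * g z)"
      by (rule positive_functionalD[OF assms(2)])
    then show ?thesis
      using radon_functional_linear[OF assms(1) indicator_offdiag_in_Cb assms(3), of 1 s] by simp
  qed
  from this[of 1] this[of "-1"] show ?thesis
    by (simp add: abs_le_iff)
qed

lemma fnorm_positive_functional:
  fixes nu :: "('a::metric_space \<times> 'a \<Rightarrow> real) \<Rightarrow> real"
  assumes "radon_functional nu" "positive_functional nu" "offdiag \<noteq> ({} :: ('a \<times> 'a) set)"
  shows "fnorm nu = nu (indicator offdiag)"
proof -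
  let ?ball = "{g \<in> Cb. supnorm g \<le> 1} :: ('a \<times> 'a \<Rightarrow> real) set"
  have bound: "\<bar>nu g\<bar> \<le> nu (indicator offdiag)" if "g \<in> ?ball" for g
    using positive_functional_abs_le[OF assms(1,2)] that by simp
  have one: "indicator offdiag \<in> ?ball"
    using assms(3) indicator_offdiag_in_Cb
    by (auto simp: supnorm_def intro!: cSUP_least)
  have "fnorm nu \<le> nu (indicator offdiag)"
    unfolding fnorm_def using one bound by (intro cSUP_least) auto
  moreover have "\<bar>nu (indicator offdiag)\<bar> \<le> fnorm nu"
    unfolding fnorm_def using one bound by (intro cSUP_upper bdd_aboveI2)
  ultimately show ?thesis
    by linarith
qed

lemma Phi_in_Cb:
  fixes f :: "'a::metric_space \<Rightarrow> real"
  assumes "\<forall>x y. \<bar>f x - f y\<bar> \<le> L * dist x y"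
  shows "Phi f \<in> Cb"
proof -
  have "\<bar>f x - f y\<bar> \<le> max L 0 * dist x y" for x y
  proof -
    have "L * dist x y \<le> max L 0 * dist x y"
      by (simp add: mult_right_mono)
    then show ?thesis
      using assms[rule_format, of x y] by linarith
  qed
  then have "lipschitz_on (max L 0) UNIV f"
    by (intro lipschitz_onI) (auto simp: dist_real_def)
  then have f: "continuous_on UNIV f"
    by (rule lipschitz_on_continuous_on)
  have "continuous_on offdiag (\<lambda>z. f (fst z))" "continuous_on offdiag (\<lambda>z. f (snd z))"
    by (rule continuous_on_compose2[OF f], intro continuous_intros, simp)+
  then have "continuous_on offdiag (\<lambda>z. (f (fst z) - f (snd z)) / dist (fst z) (snd z))"
    by (intro continuous_intros) (auto simp: offdiag_def)
  then have "continuous_on offdiag (Phi f)"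
    by (rule continuous_on_eq) (auto simp: Phi_def offdiag_def)
  moreover have "\<bar>Phi f (x, y)\<bar> \<le> L" if "x \<noteq> y" for x y
    using assms that by (simp add: Phi_def abs_divide divide_le_eq)
  then have "bounded (Phi f ` offdiag)"
    by (auto simp: bounded_iff offdiag_def)
  ultimately show ?thesis
    by (auto simp: Cb_def Phi_def offdiag_def)
qed

lemma supnorm_Phi: "supnorm (Phi f) = lip_const f"
  unfolding supnorm_def lip_const_def
  by (rule SUP_cong) (auto simp: Phi_def abs_divide)

lemma Phi_in_Gset:
  assumes "Phi f \<in> Cb"
  shows "Phi f \<in> Gset" and "(\<lambda>z. - Phi f z) \<in> Gset"
  using assms Cb_linear_combination[OF assms assms, of "-1" 0]
  by (auto simp: Gset_def Phi_def)

lemma preceq_Phi_eq: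
  assumes "radon_functional nu" "radon_functional mu" "preceq nu mu" "f \<in> Lip0 x0"
  shows "nu (Phi f) = mu (Phi f)"
proof -
  have Phi: "Phi f \<in> Cb"
    using assms(4) Phi_in_Cb by (auto simp: Lip0_def)
  have "nu (Phi f) \<le> mu (Phi f)" "nu (\<lambda>z. - Phi f z) \<le> mu (\<lambda>z. - Phi f z)"
    using preceqD[OF assms(3)] Phi_in_Gset[OF Phi] by simp_all
  then show ?thesis
    using radon_functional_uminus[OF assms(1) Phi] radon_functional_uminus[OF assms(2) Phi]
    by linarith
qed

lemma adj_norm_preceq_eq:
  assumes "radon_functional nu" "radon_functional mu" "preceq nu mu"
  shows "adj_norm x0 mu = adj_norm x0 nu"
  unfolding adj_norm_def using preceq_Phi_eq[OF assms] by (intro SUP_cong) auto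

lemma adj_norm_le_positive_functional:
  fixes nu :: "('a::metric_space \<times> 'a \<Rightarrow> real) \<Rightarrow> real"
  assumes "radon_functional nu" "positive_functional nu" "offdiag \<noteq> ({} :: ('a \<times> 'a) set)"
  shows "adj_norm x0 nu \<le> nu (indicator offdiag)"
  unfolding adj_norm_def
proof (rule cSUP_least)
  have "lip_const (\<lambda>x::'a. 0::real) = 0"
    using assms(3) by (simp add: lip_const_def case_prod_beta')
  then show "{f \<in> Lip0 x0. lip_const f \<le> 1} \<noteq> {}"
    by (auto simp: Lip0_def intro!: exI[of _ "\<lambda>_. 0"] exI[of _ 0])
next
  fix f assume "f \<in> {f \<in> Lip0 x0. lip_const f \<le> 1}"
  then obtain L where "\<forall>x y. \<bar>f x - f y\<bar> \<le> L * dist x y" "lip_const f \<le> 1"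
    by (auto simp: Lip0_def)
  then show "\<bar>nu (Phi f)\<bar> \<le> nu (indicator offdiag)"
    using positive_functional_abs_le[OF assms(1,2) Phi_in_Cb] by (simp add: supnorm_Phi)
qed

lemma gamma_M_le:
  fixes x u y :: "'a::metric_space"
  assumes "x \<noteq> u" "u \<noteq> y" "x \<noteq> y"
  shows "gamma_M TYPE('a) \<le> (dist x u + dist u y) / dist x y"
  unfolding gamma_M_def using assms by (intro cInf_lower bdd_belowI[of _ 0]) auto

lemma constant_minus_in_Gset:
  fixes g :: "'a::metric_space \<times> 'a \<Rightarrow> real"
  assumes "gamma_M TYPE('a) > 1" "g \<in> Cb"
  obtains K where "(\<lambda>z. K * indicator offdiag z - g z) \<in> Gset"
proof -
  define \<gamma> where "\<gamma> = gamma_M TYPE('a)"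
  obtain B where B: "\<And>z. \<bar>g z\<bar> \<le> B"
    using Cb_bounded[OF assms(2)] by blast
  have weighted_bound: "\<bar>dist v w * g (v, w)\<bar> \<le> dist v w * B" for v w
    using B[of "(v, w)"] by (simp add: abs_mult mult_left_mono)
  define K where "K = B * (\<gamma> + 1) / (\<gamma> - 1)"
  have "\<gamma> > 1" "0 \<le> B"
    using assms(1) B[of undefined] by (auto simp: \<gamma>_def)
  then have K: "(K - B) * \<gamma> = K + B" "K - B \<ge> 0"
    by (auto simp: K_def field_simps)
  have "dist x y * (K - g (x, y)) \<le> dist x u * (K - g (x, u)) + dist u y * (K - g (u, y))"
    if "x \<noteq> u" "u \<noteq> y" "x \<noteq> y" for x u y
  proof -
    have "\<gamma> * dist x y \<le> dist x u + dist u y"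
      using gamma_M_le[OF that] that by (simp add: \<gamma>_def le_divide_eq)
    have "dist x y * (K - g (x, y)) \<le> (K + B) * dist x y"
      using weighted_bound[of x y] by (simp add: algebra_simps abs_le_iff)
    also have "\<dots> = (K - B) * (\<gamma> * dist x y)"
      by (simp only: mult.assoc[symmetric] K(1))
    also have "\<dots> \<le> (K - B) * (dist x u + dist u y)"
      using \<open>\<gamma> * dist x y \<le> dist x u + dist u y\<close> K(2) by (rule mult_left_mono)
    also have "\<dots> \<le> dist x u * (K - g (x, u)) + dist u y * (K - g (u, y))"
      using weighted_bound[of x u] weighted_bound[of u y] by (simp add: algebra_simps abs_le_iff)
    finally show ?thesis .
  qed
  then have "(\<lambda>z. K * indicator offdiag z - g z) \<in> Gset"
    using Cb_linear_combination[OF indicator_offdiag_in_Cb assms(2), of K "-1"]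
    by (simp add: Gset_def)
  then show thesis by (rule that)
qed

lemma preceq_converse_if_mass_eq:
  fixes nu mu :: "('a::metric_space \<times> 'a \<Rightarrow> real) \<Rightarrow> real"
  assumes "gamma_M TYPE('a) > 1" "radon_functional nu" "radon_functional mu" "preceq nu mu"
    and "nu (indicator offdiag) = mu (indicator offdiag)"
  shows "preceq mu nu"
  unfolding preceq_def
proof
  fix g :: "'a \<times> 'a \<Rightarrow> real"
  assume "g \<in> Gset"
  then have g: "g \<in> Cb"
    by (simp add: Gset_def)
  obtain K where "(\<lambda>z. K * indicator offdiag z - g z) \<in> Gset"
    using constant_minus_in_Gset[OF assms(1) g] .
  then have "nu (\<lambda>z. K * indicator offdiag z - g z)
      \<le> mu (\<lambda>z. K * indicator offdiag z - g z)"
    by (rule preceqD[OF assms(4)])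
  then show "mu g \<le> nu g"
    using assms(5) radon_functional_linear[OF assms(2) indicator_offdiag_in_Cb g, of K "-1"]
      radon_functional_linear[OF assms(3) indicator_offdiag_in_Cb g, of K "-1"]
    by simp
qed

theorem corollary3p18:
  fixes x0 :: "'a::complete_space"
    and mu :: "('a \<times> 'a \<Rightarrow> real) \<Rightarrow> real"
  assumes "\<exists>x u y :: 'a. x \<noteq> u \<and> u \<noteq> y \<and> x \<noteq> y"
    and "gamma_M TYPE('a) > 1"
    and "radon_functional mu"
    and "positive_functional mu"
    and "fnorm mu = adj_norm x0 mu"
  shows "preceq_minimal mu"
  unfolding preceq_minimal_def
proof (intro allI impI, elim conjE)
  fix nu assume nu: "radon_functional nu" "positive_functional nu" "preceq nu mu"
  have nonempty: "offdiag \<noteq> ({} :: ('a \<times> 'a) set)"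
    using assms(1) by (auto simp: offdiag_def)
  have "mu (indicator offdiag) = adj_norm x0 mu"
    using fnorm_positive_functional[OF assms(3,4) nonempty] assms(5) by simp
  also have "\<dots> = adj_norm x0 nu"
    by (rule adj_norm_preceq_eq[OF nu(1) assms(3) nu(3)])
  also have "\<dots> \<le> nu (indicator offdiag)"
    by (rule adj_norm_le_positive_functional[OF nu(1,2) nonempty])
  finally have "mu (indicator offdiag) \<le> nu (indicator offdiag)" .
  moreover have "nu (indicator offdiag) \<le> mu (indicator offdiag)"
    by (rule preceqD[OF nu(3) indicator_offdiag_in_Gset])
  ultimately show "preceq mu nu"
    using preceq_converse_if_mass_eq[OF assms(2) nu(1) assms(3) nu(3)] by simp
qed

end
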